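(* Let $R$ be a finitely generated integral $\mathbb{K}$-algebra with an effective, pointed grading by a finitely generated abelian group $K$, let $(\pi,\mathrm{id}_K)\colon S=\mathbb{K}[T_1,\dots,T_r]\to R$ be a minimal presentation, $I:=\ker\pi$, $G:=\operatorname{Aut}_K(S)$, $W:=\bigoplus_{u\in\Omega_I}S_u$ and $I_W:=I\cap W$. Then $I_W$ generates the ideal $I$, and $$\operatorname{Stab}_I(G)=\operatorname{Stab}_{I_W}(G)=\{g\in G;\ g\cdot I_W=I_W\}.$$
   Context: $\mathbb{K}$ algebraically closed of characteristic zero. $\operatorname{Aut}_K(S)$ is the group of graded automorphisms $(\varphi,\psi)$ of $S$, acting by $f\mapsto\varphi(f)$; $\operatorname{Stab}_N(G)=\{g\in G;\ g\cdot N=N\}$. Effective/pointed: the weight monoid $\omega(R)=\{w;R_w\ne0\}$ generates $K$, $R_0=\mathbb{K}$ and the cone generated by $\omega(R)$ in $K\otimes\mathbb{Q}$ contains no line. Minimal presentation: graded epimorphism $(\pi,\kappa)$ from a $K$-graded polynomial ring with homogeneous variables, $\kappa$ a group isomorphism, $\ker\pi\subseteq\langle T_1,\dots,T_r\rangle^2$. $w'\le w$ iff $w-w'\in\omega(S)$; $\Omega_I:=\{w\in K;\ I_w\not\subseteq I_{<w}\}$ with $I_{<w}$ the ideal of $S$ generated by all $I_{w'}=I\cap S_{w'}$, $w'<w$. *)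

theory Defs
  imports "HOL-Library.Poly_Mapping" "HOL-Computational_Algebra.Polynomial"
begin

text \<open>Polynomial ring K[T_i : i in 'n] as finitely supported maps from exponent vectors
  to coefficients.\<close>
type_synonym ('n, 'k) mpoly = "('n \<Rightarrow>\<^sub>0 nat) \<Rightarrow>\<^sub>0 'k"

definition alg_closed_field :: "'k::field itself \<Rightarrow> bool" where
  "alg_closed_field _ \<longleftrightarrow> (\<forall>p :: 'k poly. degree p > 0 \<longrightarrow> (\<exists>x. poly p x = 0))"

primrec gmult :: "nat \<Rightarrow> 'g::ab_group_add \<Rightarrow> 'g" where
  "gmult 0 x = 0"
| "gmult (Suc n) x = x + gmult n x"

definition group_gen :: "'g::ab_group_add set \<Rightarrow> 'g set" where
  "group_gen A = \<Inter>{H. 0 \<in> H \<and> A \<subseteq> H \<and> (\<forall>x\<in>H. \<forall>y\<in>H. x - y \<in> H)}"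

definition fin_gen_group :: "'g::ab_group_add itself \<Rightarrow> bool" where
  "fin_gen_group _ \<longleftrightarrow> (\<exists>A :: 'g set. finite A \<and> group_gen A = UNIV)"

definition torsion :: "'g::ab_group_add \<Rightarrow> bool" where
  "torsion x \<longleftrightarrow> (\<exists>n>0. gmult n x = 0)"

text \<open>x \<otimes> 1 lies in the rational cone generated by Om inside K \<otimes> Q.\<close>
definition in_qcone :: "'g::ab_group_add set \<Rightarrow> 'g \<Rightarrow> bool" where
  "in_qcone Om x \<longleftrightarrow> (\<exists>n>0. \<exists>c :: 'g \<Rightarrow> nat. finite {w. c w \<noteq> 0} \<and> {w. c w \<noteq> 0} \<subseteq> Om \<and>
      torsion (gmult n x - (\<Sum>w\<in>{w. c w \<noteq> 0}. gmult (c w) w)))"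

definition qcone_contains_line :: "'g::ab_group_add set \<Rightarrow> bool" where
  "qcone_contains_line Om \<longleftrightarrow> (\<exists>x. \<not> torsion x \<and> in_qcone Om x \<and> in_qcone Om (- x))"

definition mdeg :: "('n::finite \<Rightarrow> 'g::ab_group_add) \<Rightarrow> ('n \<Rightarrow>\<^sub>0 nat) \<Rightarrow> 'g" where
  "mdeg deg m = (\<Sum>i\<in>UNIV. gmult (Poly_Mapping.lookup m i) (deg i))"

definition tdeg :: "('n::finite \<Rightarrow>\<^sub>0 nat) \<Rightarrow> nat" where
  "tdeg m = (\<Sum>i\<in>UNIV. Poly_Mapping.lookup m i)"

definition hom_part :: "('n::finite \<Rightarrow> 'g::ab_group_add) \<Rightarrow> 'g \<Rightarrow> ('n, 'k::zero) mpoly set" where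
  "hom_part deg w = {f. \<forall>m\<in>Poly_Mapping.keys f. mdeg deg m = w}"

definition const :: "'k::zero \<Rightarrow> ('n, 'k) mpoly" where
  "const c = Poly_Mapping.single 0 c"

definition gen_ideal :: "'a::comm_ring_1 set \<Rightarrow> 'a set" where
  "gen_ideal A = {f. \<exists>B c. finite B \<and> B \<subseteq> A \<and> f = (\<Sum>b\<in>B. c b * b)}"

definition weight_monoid_S :: "('n::finite \<Rightarrow> 'g::ab_group_add) \<Rightarrow> ('n, 'k::zero) mpoly itself \<Rightarrow> 'g set" where
  "weight_monoid_S deg _ = {w. hom_part deg w \<noteq> ({0} :: ('n, 'k) mpoly set)}"

definition gle :: "('n::finite \<Rightarrow> 'g::ab_group_add) \<Rightarrow> ('n, 'k::zero) mpoly itself \<Rightarrow> 'g \<Rightarrow> 'g \<Rightarrow> bool" where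
  "gle deg T w' w \<longleftrightarrow> w - w' \<in> weight_monoid_S deg T"

definition Omega :: "('n::finite \<Rightarrow> 'g::ab_group_add) \<Rightarrow> ('n, 'k::comm_ring_1) mpoly set \<Rightarrow> 'g set" where
  "Omega deg I = {w. \<not> (I \<inter> hom_part deg w \<subseteq>
      gen_ideal (\<Union>w'\<in>{w'. gle deg TYPE(('n, 'k) mpoly) w' w \<and> w' \<noteq> w}. I \<inter> hom_part deg w'))}"

definition Wsum :: "('n::finite \<Rightarrow> 'g::ab_group_add) \<Rightarrow> ('n, 'k::comm_ring_1) mpoly set \<Rightarrow> ('n, 'k) mpoly set" where
  "Wsum deg I = {f. \<forall>m\<in>Poly_Mapping.keys f. mdeg deg m \<in> Omega deg I}"

definition graded_aut :: "('n::finite \<Rightarrow> 'g::ab_group_add) \<Rightarrow>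
    (('n, 'k::comm_ring_1) mpoly \<Rightarrow> ('n, 'k) mpoly) \<times> ('g \<Rightarrow> 'g) \<Rightarrow> bool" where
  "graded_aut deg g \<longleftrightarrow> (case g of (\<phi>, \<psi>) \<Rightarrow>
      bij \<phi> \<and> (\<forall>f h. \<phi> (f + h) = \<phi> f + \<phi> h) \<and> (\<forall>f h. \<phi> (f * h) = \<phi> f * \<phi> h) \<and>
      (\<forall>c. \<phi> (const c) = const c) \<and>
      bij \<psi> \<and> (\<forall>u v. \<psi> (u + v) = \<psi> u + \<psi> v) \<and>
      (\<forall>w. \<phi> ` hom_part deg w = hom_part deg (\<psi> w)))"

definition Aut_K :: "('n::finite \<Rightarrow> 'g::ab_group_add) \<Rightarrow>
    ((('n, 'k::comm_ring_1) mpoly \<Rightarrow> ('n, 'k) mpoly) \<times> ('g \<Rightarrow> 'g)) set" where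
  "Aut_K deg = {g. graded_aut deg g}"

definition Stab :: "'a set \<Rightarrow> (('a \<Rightarrow> 'a) \<times> 'b) set \<Rightarrow> (('a \<Rightarrow> 'a) \<times> 'b) set" where
  "Stab N G = {g\<in>G. fst g ` N = N}"

end

theory Submission
  imports Defs "HOL-Library.FuncSet"
begin

text \<open>
  Since \<open>R\<^sub>0 = \<bbbK>\<close> and the presentation is minimal, no non-constant monomial has degree \<open>0\<close>;
  hence every degree carries only finitely many monomials and there is no infinite strictly
  descending chain of degrees of monomials. For \<open>w \<notin> \<Omega>\<^sub>I\<close> the piece \<open>I\<^sub>w\<close> lies in the ideal
  generated by pieces of strictly smaller degree, so descending shows that \<open>I\<close> is generated by
  \<open>I\<^sub>W\<close>. A graded automorphism \<open>(\<phi>,\<psi>)\<close> with \<open>\<phi>(I) = I\<close> maps \<open>I\<^sub>w\<close> onto \<open>I\<^sub>\<psi>\<^sub>(\<^sub>w\<^sub>)\<close> and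
  preserves \<open>\<le>\<close>, so \<open>\<psi>(\<Omega>\<^sub>I) = \<Omega>\<^sub>I\<close> and \<open>\<phi>(I\<^sub>W) = I\<^sub>W\<close>; conversely \<open>\<phi>(I\<^sub>W) = I\<^sub>W\<close> forces
  \<open>\<phi>(I) = I\<close> because \<open>I\<^sub>W\<close> generates \<open>I\<close>.
\<close>

lemma gen_ideal_0: "0 \<in> gen_ideal A"
  unfolding gen_ideal_def by (rule CollectI, rule exI[of _ "{}"]) auto

lemma gen_ideal_base: "a \<in> A \<Longrightarrow> a \<in> gen_ideal A"
  unfolding gen_ideal_def by (rule CollectI, rule exI[of _ "{a}"], rule exI[of _ "\<lambda>_. 1"]) auto

lemma gen_ideal_add:
  assumes "x \<in> gen_ideal A" and "y \<in> gen_ideal A"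
  shows "x + y \<in> gen_ideal A"
proof -
  obtain B c where B: "finite B" "B \<subseteq> A" "x = (\<Sum>b\<in>B. c b * b)"
    using assms(1) unfolding gen_ideal_def by auto
  obtain B' c' where B': "finite B'" "B' \<subseteq> A" "y = (\<Sum>b\<in>B'. c' b * b)"
    using assms(2) unfolding gen_ideal_def by auto
  define d where "d b = (if b \<in> B then c b else 0) + (if b \<in> B' then c' b else 0)" for b
  have "x = (\<Sum>b\<in>B \<union> B'. (if b \<in> B then c b else 0) * b)"
    unfolding B(3) by (rule sum.mono_neutral_cong_left) (use B B' in auto)
  moreover have "y = (\<Sum>b\<in>B \<union> B'. (if b \<in> B' then c' b else 0) * b)"
    unfolding B'(3) by (rule sum.mono_neutral_cong_left) (use B B' in auto)
  ultimately have "x + y = (\<Sum>b\<in>B \<union> B'. d b * b)"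
    by (simp add: d_def distrib_right sum.distrib)
  with B B' show ?thesis
    unfolding gen_ideal_def by (intro CollectI exI[of _ "B \<union> B'"] exI[of _ d]) simp
qed

lemma gen_ideal_mult:
  assumes "x \<in> gen_ideal A"
  shows "c * x \<in> gen_ideal A"
proof -
  obtain B d where B: "finite B" "B \<subseteq> A" "x = (\<Sum>b\<in>B. d b * b)"
    using assms unfolding gen_ideal_def by auto
  then have "c * x = (\<Sum>b\<in>B. (c * d b) * b)"
    by (simp add: sum_distrib_left mult.assoc)
  with B show ?thesis
    unfolding gen_ideal_def by (intro CollectI exI[of _ B] exI[of _ "\<lambda>b. c * d b"]) simp
qed

lemma gen_ideal_sum:
  assumes "finite B" and "\<And>b. b \<in> B \<Longrightarrow> x b \<in> gen_ideal A"
  shows "(\<Sum>b\<in>B. x b) \<in> gen_ideal A"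
  using assms by (induct B rule: finite_induct) (auto intro: gen_ideal_add gen_ideal_0)

lemma gen_ideal_mono:
  assumes "A \<subseteq> gen_ideal B"
  shows "gen_ideal A \<subseteq> gen_ideal B"
proof
  fix x
  assume "x \<in> gen_ideal A"
  then obtain B' c where "finite B'" "B' \<subseteq> A" "x = (\<Sum>b\<in>B'. c b * b)"
    unfolding gen_ideal_def by auto
  with assms show "x \<in> gen_ideal B"
    by (auto intro!: gen_ideal_sum gen_ideal_mult)
qed

lemma additive_map_0:
  fixes \<phi> :: "'a::monoid_add \<Rightarrow> 'b::group_add"
  assumes "\<And>x y. \<phi> (x + y) = \<phi> x + \<phi> y"
  shows "\<phi> 0 = 0"
proof -
  have "\<phi> 0 + \<phi> 0 = \<phi> 0 + 0"
    using assms[of 0 0] by simp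
  then show ?thesis
    by (rule add_left_imp_eq)
qed

lemma image_gen_ideal_subset:
  fixes \<phi> :: "'a::comm_ring_1 \<Rightarrow> 'b::comm_ring_1"
  assumes add: "\<And>x y. \<phi> (x + y) = \<phi> x + \<phi> y" and mult: "\<And>x y. \<phi> (x * y) = \<phi> x * \<phi> y"
  shows "\<phi> ` gen_ideal A \<subseteq> gen_ideal (\<phi> ` A)"
proof
  fix y
  assume "y \<in> \<phi> ` gen_ideal A"
  then obtain B c where B: "finite B" "B \<subseteq> A" "y = \<phi> (\<Sum>b\<in>B. c b * b)"
    unfolding gen_ideal_def by auto
  have "\<phi> (\<Sum>b\<in>B. c b * b) = (\<Sum>b\<in>B. \<phi> (c b) * \<phi> b)"
    using B(1) by (induct B rule: finite_induct) (auto simp: additive_map_0[OF add] add mult)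
  with B(3) have "y = (\<Sum>b\<in>B. \<phi> (c b) * \<phi> b)"
    by simp
  also have "\<dots> \<in> gen_ideal (\<phi> ` A)"
  proof (rule gen_ideal_sum[OF B(1)])
    fix b
    assume "b \<in> B"
    with B(2) have "\<phi> b \<in> gen_ideal (\<phi> ` A)"
      by (auto intro: gen_ideal_base)
    then show "\<phi> (c b) * \<phi> b \<in> gen_ideal (\<phi> ` A)"
      by (rule gen_ideal_mult)
  qed
  finally show "y \<in> gen_ideal (\<phi> ` A)" .
qed

lemma gmult_add: "gmult (a + b) x = gmult a x + gmult b x"
  by (induct a) (auto simp: add.assoc)

lemma mdeg_add: "mdeg deg (m + n) = mdeg deg m + mdeg deg n"
  unfolding mdeg_def by (simp add: lookup_add gmult_add sum.distrib)

lemma mdeg_0 [simp]: "mdeg deg 0 = 0"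
  unfolding mdeg_def by simp

lemma tdeg_add: "tdeg (m + n) = tdeg m + tdeg n"
  unfolding tdeg_def by (simp add: lookup_add sum.distrib)

lemma tdeg_single [simp]: "tdeg (Poly_Mapping.single (i::'n::finite) k) = k"
  unfolding tdeg_def by (simp add: lookup_single when_def)

lemma monomial_eq_single_add:
  fixes m :: "'n \<Rightarrow>\<^sub>0 nat"
  assumes "m \<noteq> 0"
  obtains i m' where "m = Poly_Mapping.single i 1 + m'"
proof -
  obtain i where i: "Poly_Mapping.lookup m i \<noteq> 0"
    using assms by (metis lookup_zero poly_mapping_eqI)
  have "m = Poly_Mapping.single i 1 + (m - Poly_Mapping.single i 1)"
    by (rule poly_mapping_eqI) (use i in \<open>auto simp: lookup_add lookup_minus lookup_single when_def\<close>)
  then show thesis by (rule that)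
qed

lemma zero_in_hom_part [simp]: "0 \<in> hom_part deg w"
  by (simp add: hom_part_def)

lemma hom_part_nontrivial_iff:
  "hom_part deg w \<noteq> {0 :: ('n::finite, 'k::zero_neq_one) mpoly} \<longleftrightarrow> (\<exists>m. mdeg deg m = w)"
proof
  assume "hom_part deg w \<noteq> {0 :: ('n, 'k) mpoly}"
  then obtain f :: "('n, 'k) mpoly" where f: "f \<in> hom_part deg w" "f \<noteq> 0"
    using zero_in_hom_part by blast
  then obtain m where "m \<in> Poly_Mapping.keys f"
    by fastforce
  with f(1) show "\<exists>m. mdeg deg m = w"
    by (auto simp: hom_part_def)
next
  assume "\<exists>m. mdeg deg m = w"
  then obtain m where "mdeg deg m = w" ..
  then have "Poly_Mapping.single m (1::'k) \<in> hom_part deg w"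
    by (simp add: hom_part_def)
  moreover have "Poly_Mapping.single m (1::'k) \<noteq> 0"
    by (metis lookup_single_eq lookup_zero zero_neq_one)
  ultimately show "hom_part deg w \<noteq> {0 :: ('n, 'k) mpoly}"
    by blast
qed

lemma gle_iff: "gle deg TYPE(('n::finite, 'k::zero_neq_one) mpoly) w' w \<longleftrightarrow> (\<exists>n. mdeg deg n = w - w')"
  by (simp add: gle_def weight_monoid_S_def hom_part_nontrivial_iff)

definition hom_comp :: "('n::finite \<Rightarrow> 'g::ab_group_add) \<Rightarrow> 'g \<Rightarrow> ('n, 'k::zero) mpoly \<Rightarrow> ('n, 'k) mpoly"
  where "hom_comp deg w f = Abs_poly_mapping (\<lambda>m. if mdeg deg m = w then Poly_Mapping.lookup f m else 0)"

lemma lookup_hom_comp: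
  "Poly_Mapping.lookup (hom_comp deg w f) m = (if mdeg deg m = w then Poly_Mapping.lookup f m else 0)"
proof -
  have "finite {m. (if mdeg deg m = w then Poly_Mapping.lookup f m else 0) \<noteq> 0}"
    by (rule finite_subset[OF _ finite_keys[of f]]) (auto simp: in_keys_iff split: if_splits)
  then show ?thesis
    unfolding hom_comp_def by simp
qed

lemma keys_hom_comp: "Poly_Mapping.keys (hom_comp deg w f) = {m \<in> Poly_Mapping.keys f. mdeg deg m = w}"
  by (auto simp: in_keys_iff lookup_hom_comp split: if_splits)

lemma hom_comp_in_hom_part: "hom_comp deg w f \<in> hom_part deg w"
  by (auto simp: hom_part_def keys_hom_comp)

lemma hom_comp_eq_0:
  assumes "w \<notin> mdeg deg ` Poly_Mapping.keys f"
  shows "hom_comp deg w f = 0"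
proof -
  have "Poly_Mapping.keys (hom_comp deg w f) = {}"
    using assms by (auto simp: keys_hom_comp)
  then show ?thesis by simp
qed

lemma sum_hom_comp:
  fixes f :: "('n::finite, 'k::comm_monoid_add) mpoly"
  shows "(\<Sum>w\<in>mdeg deg ` Poly_Mapping.keys f. hom_comp deg w f) = f"
proof (rule poly_mapping_eqI)
  fix m
  have "Poly_Mapping.lookup (\<Sum>w\<in>mdeg deg ` Poly_Mapping.keys f. hom_comp deg w f) m
      = (\<Sum>w\<in>mdeg deg ` Poly_Mapping.keys f. if mdeg deg m = w then Poly_Mapping.lookup f m else 0)"
    by (simp add: lookup_sum lookup_hom_comp)
  also have "\<dots> = Poly_Mapping.lookup f m"
    by (auto simp: sum.delta in_keys_iff)
  finally show "Poly_Mapping.lookup (\<Sum>w\<in>mdeg deg ` Poly_Mapping.keys f. hom_comp deg w f) m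
      = Poly_Mapping.lookup f m" .
qed

lemma Wsum_sum:
  assumes "finite A" and "\<And>a. a \<in> A \<Longrightarrow> x a \<in> Wsum deg I"
  shows "sum x A \<in> Wsum deg I"
  using assms
proof (induct A rule: finite_induct)
  case empty
  then show ?case by (simp add: Wsum_def)
next
  case (insert a A)
  then show ?case
    using keys_add[of "x a" "sum x A"] by (auto simp: Wsum_def)
qed

section \<open>Dickson's lemma\<close>

lemma nat_seq_incseq_subseq:
  fixes u :: "nat \<Rightarrow> nat"
  obtains r where "strict_mono r" "incseq (u \<circ> r)"
proof -
  obtain r where r: "strict_mono r" "monoseq (u \<circ> r)"
    using seq_monosub by (auto simp: comp_def)
  show thesis
  proof (cases "incseq (u \<circ> r)")
    case True
    with r(1) show thesis by (rule that)
  next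
    case False
    with r(2) have dec: "decseq (u \<circ> r)"
      by (simp add: monoseq_iff)
    text \<open>A decreasing sequence of naturals is eventually constant at its least value.\<close>
    define a where "a = (LEAST a. \<exists>n. u (r n) = a)"
    have "\<exists>N. u (r N) = a"
      unfolding a_def by (rule LeastI_ex) blast
    then obtain N where N: "u (r N) = a" ..
    have "u (r n) = a" if "N \<le> n" for n
    proof (rule antisym)
      show "u (r n) \<le> a"
        using dec that N by (auto simp: decseq_def)
      show "a \<le> u (r n)"
        unfolding a_def by (rule Least_le) blast
    qed
    then have "incseq (u \<circ> (\<lambda>k. r (k + N)))"
      by (simp add: incseq_def)
    moreover have "strict_mono (\<lambda>k. r (k + N))"
      using r(1) by (simp add: strict_mono_def)
    ultimately show thesis
      using that by blast
  qed
qed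

lemma incseq_coordinates_subseq:
  fixes s :: "nat \<Rightarrow> 'i \<Rightarrow> nat"
  assumes "finite J"
  obtains r where "strict_mono r" "\<forall>i\<in>J. incseq (\<lambda>k. s (r k) i)"
  using assms
proof (induct J arbitrary: thesis rule: finite_induct)
  case empty
  show ?case
    by (rule empty(1)[of id]) (simp_all add: strict_mono_def)
next
  case (insert j J)
  obtain r where r: "strict_mono r" "\<forall>i\<in>J. incseq (\<lambda>k. s (r k) i)"
    using insert(3) by blast
  obtain r' where r': "strict_mono r'" "incseq ((\<lambda>k. s (r k) j) \<circ> r')"
    by (rule nat_seq_incseq_subseq)
  have "incseq (\<lambda>k. s (r (r' k)) i)" if "i \<in> J" for i
    using r(2) that strict_mono_mono[OF r'(1)] by (auto simp: incseq_def mono_def)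
  with r' show ?case
    using strict_mono_o[OF r(1) r'(1)] by (intro insert(4)[of "r \<circ> r'"]) (auto simp: comp_def)
qed

lemma infinite_monomials_contain_multiple:
  fixes A :: "('n::finite \<Rightarrow>\<^sub>0 nat) set"
  assumes "infinite A"
  obtains m d where "m \<in> A" "m + d \<in> A" "d \<noteq> 0"
proof -
  obtain s :: "nat \<Rightarrow> 'n \<Rightarrow>\<^sub>0 nat" where s: "inj s" "range s \<subseteq> A"
    using infinite_iff_countable_subset[THEN iffD1, OF assms] by blast
  obtain r where r: "strict_mono r" "\<forall>i\<in>UNIV. incseq (\<lambda>k. Poly_Mapping.lookup (s (r k)) i)"
    by (rule incseq_coordinates_subseq[OF finite_UNIV])
  define d where "d = s (r 1) - s (r 0)"
  have "Poly_Mapping.lookup (s (r 0)) i \<le> Poly_Mapping.lookup (s (r 1)) i" for i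
    using r(2) incseqD[of _ 0 1] by blast
  then have sum: "s (r 0) + d = s (r 1)"
    by (intro poly_mapping_eqI) (simp add: d_def lookup_add lookup_minus)
  show thesis
  proof (rule that)
    show "s (r 0) \<in> A" "s (r 0) + d \<in> A"
      unfolding sum using s(2) by auto
    have "r 0 \<noteq> r 1"
      using strict_monoD[OF r(1), of 0 1] by simp
    with s(1) have "s (r 1) \<noteq> s (r 0)"
      by (auto dest: injD)
    with sum show "d \<noteq> 0"
      by auto
  qed
qed

lemma finite_monomial_divisors: "finite {m. \<exists>n. m + n = (M :: 'n::finite \<Rightarrow>\<^sub>0 nat)}"
proof (rule finite_imageD)
  show "inj_on Poly_Mapping.lookup {m. \<exists>n. m + n = M}"
    by (rule inj_onI) (simp add: poly_mapping.lookup_inject)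
  have "Poly_Mapping.lookup ` {m. \<exists>n. m + n = M} \<subseteq> PiE UNIV (\<lambda>i. {..Poly_Mapping.lookup M i})"
    by (auto simp: lookup_add)
  then show "finite (Poly_Mapping.lookup ` {m. \<exists>n. m + n = M})"
    by (rule finite_subset) (simp add: finite_PiE)
qed

section \<open>Positively graded polynomial rings\<close>

locale positive_grading =
  fixes deg :: "'n::finite \<Rightarrow> 'g::ab_group_add"
  assumes mdeg_eq_0_imp: "mdeg deg m = 0 \<Longrightarrow> m = 0"
begin

lemma finite_mdeg_fibre: "finite {m. mdeg deg m = w}"
proof (rule ccontr)
  assume "infinite {m. mdeg deg m = w}"
  then obtain m d where "mdeg deg m = w" "mdeg deg (m + d) = w" "d \<noteq> 0"
    by (rule infinite_monomials_contain_multiple) auto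
  then show False
    using mdeg_eq_0_imp[of d] by (simp add: mdeg_add)
qed

text \<open>Its cardinality is the measure for the descent on degrees.\<close>
definition divisors_of_degree :: "'g \<Rightarrow> ('n \<Rightarrow>\<^sub>0 nat) set"
  where "divisors_of_degree w = {m. \<exists>n. mdeg deg (m + n) = w}"

lemma finite_divisors_of_degree: "finite (divisors_of_degree w)"
proof -
  have "divisors_of_degree w = (\<Union>M\<in>{M. mdeg deg M = w}. {m. \<exists>n. m + n = M})"
    by (auto simp: divisors_of_degree_def)
  then show ?thesis
    by (simp add: finite_mdeg_fibre finite_monomial_divisors)
qed

lemma card_divisors_of_degree_less:
  assumes m: "mdeg deg m = w'" and n: "mdeg deg n = w - w'" and "w' \<noteq> w"
  shows "card (divisors_of_degree w') < card (divisors_of_degree w)"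
proof (rule psubset_card_mono[OF finite_divisors_of_degree])
  have "divisors_of_degree w' \<subseteq> divisors_of_degree w"
  proof
    fix x
    assume "x \<in> divisors_of_degree w'"
    then obtain k where "mdeg deg (x + k) = w'"
      by (auto simp: divisors_of_degree_def)
    with n have "mdeg deg (x + (k + n)) = w"
      by (simp add: mdeg_add add.assoc[symmetric])
    then show "x \<in> divisors_of_degree w"
      by (auto simp: divisors_of_degree_def)
  qed
  moreover have "m + n \<in> divisors_of_degree w"
    using m n by (auto simp: divisors_of_degree_def mdeg_add intro!: exI[of _ 0])
  moreover have "m + n \<notin> divisors_of_degree w'"
  proof
    assume "m + n \<in> divisors_of_degree w'"
    then obtain k where "mdeg deg (m + n + k) = w'"
      by (auto simp: divisors_of_degree_def)
    with m have "mdeg deg (n + k) = 0"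
      by (simp add: mdeg_add add.assoc)
    then have "n + k = 0"
      by (rule mdeg_eq_0_imp)
    then have "n = 0"
      by (metis add_eq_0_iff_both_eq_0 lookup_add lookup_zero poly_mapping_eqI)
    with n \<open>w' \<noteq> w\<close> show False
      by simp
  qed
  ultimately show "divisors_of_degree w' \<subset> divisors_of_degree w"
    by blast
qed

lemma hom_part_in_gen_ideal_Wsum:
  fixes I :: "('n, 'k::comm_ring_1) mpoly set"
  assumes "f \<in> I" and "f \<in> hom_part deg w"
  shows "f \<in> gen_ideal (I \<inter> Wsum deg I)"
  using assms
proof (induct "card (divisors_of_degree w)" arbitrary: w f rule: less_induct)
  case less
  show ?case
  proof (cases "w \<in> Omega deg I")
    case True
    with less.prems have "f \<in> I \<inter> Wsum deg I"
      by (auto simp: Wsum_def hom_part_def)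
    then show ?thesis
      by (rule gen_ideal_base)
  next
    case False
    let ?smaller = "\<Union>w'\<in>{w'. gle deg TYPE(('n, 'k) mpoly) w' w \<and> w' \<noteq> w}. I \<inter> hom_part deg w'"
    from False less.prems have "f \<in> gen_ideal ?smaller"
      unfolding Omega_def by blast
    moreover have "?smaller \<subseteq> gen_ideal (I \<inter> Wsum deg I)"
    proof
      fix b
      assume "b \<in> ?smaller"
      then obtain w' where w': "gle deg TYPE(('n, 'k) mpoly) w' w" "w' \<noteq> w" "b \<in> I" "b \<in> hom_part deg w'"
        by blast
      show "b \<in> gen_ideal (I \<inter> Wsum deg I)"
      proof (cases "b = 0")
        case True
        then show ?thesis by (simp add: gen_ideal_0)
      next
        case False
        then obtain m where "m \<in> Poly_Mapping.keys b"
          by fastforce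
        with w'(4) have "mdeg deg m = w'"
          by (auto simp: hom_part_def)
        moreover obtain n where "mdeg deg n = w - w'"
          using w'(1) by (auto simp: gle_iff)
        ultimately have "card (divisors_of_degree w') < card (divisors_of_degree w)"
          using w'(2) by (rule card_divisors_of_degree_less)
        then show ?thesis
          using w'(3,4) by (rule less.hyps)
      qed
    qed
    ultimately show ?thesis
      using gen_ideal_mono by blast
  qed
qed

lemma gen_ideal_Wsum_eq:
  fixes I :: "('n, 'k::comm_ring_1) mpoly set"
  assumes ideal: "gen_ideal I \<subseteq> I" and homogeneous: "\<And>f w. f \<in> I \<Longrightarrow> hom_comp deg w f \<in> I"
  shows "gen_ideal (I \<inter> Wsum deg I) = I"
proof
  have "gen_ideal (I \<inter> Wsum deg I) \<subseteq> gen_ideal I"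
    by (rule gen_ideal_mono) (auto intro: gen_ideal_base)
  with ideal show "gen_ideal (I \<inter> Wsum deg I) \<subseteq> I"
    by blast
  show "I \<subseteq> gen_ideal (I \<inter> Wsum deg I)"
  proof
    fix f
    assume "f \<in> I"
    then have "(\<Sum>w\<in>mdeg deg ` Poly_Mapping.keys f. hom_comp deg w f) \<in> gen_ideal (I \<inter> Wsum deg I)"
      by (intro gen_ideal_sum hom_part_in_gen_ideal_Wsum[OF homogeneous hom_comp_in_hom_part]) auto
    then show "f \<in> gen_ideal (I \<inter> Wsum deg I)"
      by (simp add: sum_hom_comp)
  qed
qed

end

section \<open>Kernels of minimal presentations\<close>

locale minimal_presentation =
  fixes deg :: "'n::finite \<Rightarrow> 'g::ab_group_add"
    and \<pi> :: "('n, 'k::field) mpoly \<Rightarrow> 'r::idom"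
  assumes hom_add: "\<And>f h. \<pi> (f + h) = \<pi> f + \<pi> h"
    and hom_mult: "\<And>f h. \<pi> (f * h) = \<pi> f * \<pi> h"
    and hom_one: "\<pi> 1 = 1"
    and graded: "\<And>A f. finite A \<Longrightarrow> (\<forall>w\<in>A. f w \<in> hom_part deg w) \<Longrightarrow>
                 \<pi> (\<Sum>w\<in>A. f w) = 0 \<Longrightarrow> (\<forall>w\<in>A. \<pi> (f w) = 0)"
    and degree_0_constant: "\<pi> ` hom_part deg 0 = range (\<lambda>c. \<pi> (const c))"
    and minimal: "\<And>f. \<pi> f = 0 \<Longrightarrow> \<forall>m\<in>Poly_Mapping.keys f. 2 \<le> tdeg m"
begin

lemma hom_0: "\<pi> 0 = 0"
  by (rule additive_map_0[OF hom_add])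

lemma hom_diff: "\<pi> (f - h) = \<pi> f - \<pi> h"
  using hom_add[of "f - h" h] by (simp add: algebra_simps)

lemma hom_sum: "\<pi> (sum f A) = (\<Sum>a\<in>A. \<pi> (f a))"
  by (induct A rule: infinite_finite_induct) (auto simp: hom_0 hom_add)

lemma hom_variable_neq_0: "\<pi> (Poly_Mapping.single (Poly_Mapping.single i 1) 1) \<noteq> 0"
proof
  assume "\<pi> (Poly_Mapping.single (Poly_Mapping.single i 1) 1) = 0"
  from minimal[OF this] show False
    by simp
qed

text \<open>Variables are not in the kernel by minimality, and \<open>R\<close> is a domain.\<close>
lemma hom_monomial_neq_0: "\<pi> (Poly_Mapping.single m 1) \<noteq> 0"
proof (induct "tdeg m" arbitrary: m rule: less_induct)
  case less
  show ?case
  proof (cases "m = 0")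
    case True
    then show ?thesis
      by (simp add: hom_one)
  next
    case False
    then obtain i m' where m: "m = Poly_Mapping.single i 1 + m'"
      by (rule monomial_eq_single_add)
    then have "\<pi> (Poly_Mapping.single m' 1) \<noteq> 0"
      by (intro less.hyps) (simp add: tdeg_add)
    moreover have "Poly_Mapping.single m 1
        = Poly_Mapping.single (Poly_Mapping.single i 1) 1 * Poly_Mapping.single m' (1::'k)"
      by (simp add: m mult_single)
    ultimately show ?thesis
      using hom_variable_neq_0[of i] by (simp add: hom_mult)
  qed
qed

text \<open>
  A monomial \<open>T\<^sup>m\<close> of degree \<open>0\<close> satisfies \<open>\<pi>(T\<^sup>m) = \<pi>(c)\<close> for a constant \<open>c\<close>; minimality
  forbids the constant term of \<open>T\<^sup>m - c\<close>, so \<open>c = 0\<close>, contradicting the previous lemma.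
\<close>
sublocale positive_grading deg
proof
  fix m :: "'n \<Rightarrow>\<^sub>0 nat"
  assume "mdeg deg m = 0"
  then have "Poly_Mapping.single m (1::'k) \<in> hom_part deg 0"
    by (simp add: hom_part_def)
  then obtain c where c: "\<pi> (Poly_Mapping.single m 1) = \<pi> (const c)"
    using degree_0_constant by blast
  show "m = 0"
  proof (rule ccontr)
    assume "m \<noteq> 0"
    have "\<pi> (Poly_Mapping.single m 1 - const c) = 0"
      using c by (simp add: hom_diff)
    have "c = 0"
    proof (rule ccontr)
      assume "c \<noteq> 0"
      with \<open>m \<noteq> 0\<close> have "0 \<in> Poly_Mapping.keys (Poly_Mapping.single m 1 - const c)"
        by (simp add: const_def in_keys_iff lookup_minus lookup_single)
      with minimal[OF \<open>\<pi> (_ - _) = 0\<close>] show False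
        by (auto simp: tdeg_def)
    qed
    with c hom_monomial_neq_0[of m] show False
      by (simp add: const_def hom_0)
  qed
qed

lemma gen_ideal_kernel: "gen_ideal {f. \<pi> f = 0} \<subseteq> {f. \<pi> f = 0}"
proof
  fix f
  assume "f \<in> gen_ideal {f. \<pi> f = 0}"
  then obtain B c where "finite B" "B \<subseteq> {f. \<pi> f = 0}" "f = (\<Sum>b\<in>B. c b * b)"
    unfolding gen_ideal_def by auto
  then show "f \<in> {f. \<pi> f = 0}"
    by (auto simp: hom_sum hom_mult intro!: sum.neutral)
qed

lemma hom_comp_kernel:
  assumes "\<pi> f = 0"
  shows "\<pi> (hom_comp deg w f) = 0"
proof (cases "w \<in> mdeg deg ` Poly_Mapping.keys f")
  case True
  have "\<forall>v\<in>mdeg deg ` Poly_Mapping.keys f. \<pi> (hom_comp deg v f) = 0"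
    by (rule graded) (simp_all add: assms sum_hom_comp hom_comp_in_hom_part)
  with True show ?thesis
    by blast
next
  case False
  then show ?thesis
    by (simp add: hom_comp_eq_0 hom_0)
qed

lemma gen_ideal_kernel_Wsum: "gen_ideal ({f. \<pi> f = 0} \<inter> Wsum deg {f. \<pi> f = 0}) = {f. \<pi> f = 0}"
  by (rule gen_ideal_Wsum_eq) (use gen_ideal_kernel hom_comp_kernel in auto)

end

section \<open>Graded automorphisms\<close>

lemma graded_autD:
  assumes "graded_aut deg (\<phi>, \<psi>)"
  shows "bij \<phi>" "\<And>f h. \<phi> (f + h) = \<phi> f + \<phi> h" "\<And>f h. \<phi> (f * h) = \<phi> f * \<phi> h"
    "\<And>c. \<phi> (const c) = const c" "bij \<psi>" "\<And>u v. \<psi> (u + v) = \<psi> u + \<psi> v"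
    "\<And>w. \<phi> ` hom_part deg w = hom_part deg (\<psi> w)"
  using assms unfolding graded_aut_def by auto

lemma inv_additive:
  assumes "bij f" and "\<And>x y. f (x + y) = f x + f y"
  shows "inv f (x + y) = inv f x + inv f y"
proof -
  have "f (inv f x + inv f y) = x + y"
    using assms by (simp add: bij_is_surj surj_f_inv_f)
  then show ?thesis
    using assms(1) by (metis bij_is_inj inv_f_f)
qed

lemma inv_multiplicative:
  assumes "bij f" and "\<And>x y. f (x * y) = f x * f y"
  shows "inv f (x * y) = inv f x * inv f y"
proof -
  have "f (inv f x * inv f y) = x * y"
    using assms by (simp add: bij_is_surj surj_f_inv_f)
  then show ?thesis
    using assms(1) by (metis bij_is_inj inv_f_f)
qed

lemma graded_aut_inv:
  assumes "graded_aut deg (\<phi>, \<psi>)"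
  shows "graded_aut deg (inv \<phi>, inv \<psi>)"
proof -
  note g = graded_autD[OF assms]
  have "inv \<phi> ` hom_part deg w = hom_part deg (inv \<psi> w)" for w
  proof -
    have "hom_part deg w = \<phi> ` hom_part deg (inv \<psi> w)"
      using g(7)[of "inv \<psi> w"] g(5) by (simp add: bij_is_surj surj_f_inv_f)
    then show ?thesis
      using g(1) by (simp add: bij_is_inj image_inv_f_f)
  qed
  moreover have "inv \<phi> (const c) = const c" for c
    using g(1,4) by (metis bij_is_inj inv_f_f)
  ultimately show ?thesis
    unfolding graded_aut_def using g by (auto simp: bij_imp_bij_inv inv_additive inv_multiplicative)
qed

lemma bij_image_eqI:
  assumes "bij \<phi>" and "\<phi> ` A \<subseteq> A" and "inv \<phi> ` A \<subseteq> A"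
  shows "\<phi> ` A = A"
proof (rule subset_antisym)
  show "A \<subseteq> \<phi> ` A"
  proof
    fix x
    assume "x \<in> A"
    with assms(3) have "inv \<phi> x \<in> A"
      by blast
    moreover have "x = \<phi> (inv \<phi> x)"
      using assms(1) by (simp add: bij_is_surj surj_f_inv_f)
    ultimately show "x \<in> \<phi> ` A"
      by blast
  qed
qed (rule assms(2))

lemma inv_image_eq:
  assumes "bij \<phi>" and "\<phi> ` A = A"
  shows "inv \<phi> ` A = A"
  using image_inv_f_f[OF bij_is_inj[OF assms(1)], of A] assms(2) by simp

lemma gle_graded_aut:
  fixes \<phi> :: "('n::finite, 'k::comm_ring_1) mpoly \<Rightarrow> ('n, 'k) mpoly"
  assumes g: "graded_aut deg (\<phi>, \<psi>)" and "gle deg TYPE(('n, 'k) mpoly) w' w"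
  shows "gle deg TYPE(('n, 'k) mpoly) (\<psi> w') (\<psi> w)"
proof -
  note g = graded_autD[OF g]
  have "hom_part deg (w - w') \<noteq> {0 :: ('n, 'k) mpoly}"
    using assms(2) by (simp add: gle_def weight_monoid_S_def)
  then obtain f :: "('n, 'k) mpoly" where f: "f \<in> hom_part deg (w - w')" "f \<noteq> 0"
    using zero_in_hom_part by blast
  have "\<psi> (w - w') = \<psi> w - \<psi> w'"
    using g(6)[of "w - w'" w'] by (simp add: algebra_simps)
  with f g(7)[of "w - w'"] have "\<phi> f \<in> hom_part deg (\<psi> w - \<psi> w')"
    by (metis imageI)
  moreover have "\<phi> f \<noteq> 0"
    using f(2) additive_map_0[OF g(2)] bij_is_inj[OF g(1)] by (metis injD)
  ultimately show ?thesis
    unfolding gle_def weight_monoid_S_def by auto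
qed

text \<open>\<open>\<phi>\<close> maps the pieces of \<open>I\<close> below \<open>w\<close> to pieces below \<open>\<psi> w\<close>, since \<open>\<psi>\<close> preserves \<open>\<le>\<close>.\<close>
lemma not_in_Omega_graded_aut:
  fixes I :: "('n::finite, 'k::comm_ring_1) mpoly set"
  assumes g: "graded_aut deg (\<phi>, \<psi>)" and I: "\<phi> ` I = I" and w: "w \<notin> Omega deg I"
  shows "\<psi> w \<notin> Omega deg I"
proof -
  note g' = graded_autD[OF g]
  define smaller where
    "smaller v = (\<Union>w'\<in>{w'. gle deg TYPE(('n, 'k) mpoly) w' v \<and> w' \<noteq> v}. I \<inter> hom_part deg w')" for v
  have "\<phi> ` smaller w \<subseteq> smaller (\<psi> w)"
  proof
    fix x
    assume "x \<in> \<phi> ` smaller w"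
    then obtain b w' where b: "x = \<phi> b" "gle deg TYPE(('n, 'k) mpoly) w' w" "w' \<noteq> w"
        "b \<in> I" "b \<in> hom_part deg w'"
      unfolding smaller_def by blast
    have "\<psi> w' \<noteq> \<psi> w"
      using b(3) bij_is_inj[OF g'(5)] by (auto dest: injD)
    with b I g'(7) gle_graded_aut[OF g b(2)] show "x \<in> smaller (\<psi> w)"
      unfolding smaller_def by blast
  qed
  then have smaller_image: "\<phi> ` gen_ideal (smaller w) \<subseteq> gen_ideal (smaller (\<psi> w))"
    using image_gen_ideal_subset[of \<phi>, OF g'(2,3)] gen_ideal_mono
    by (metis gen_ideal_base image_mono order_trans subsetI)
  have "I \<inter> hom_part deg (\<psi> w) = \<phi> ` (I \<inter> hom_part deg w)"
    using I g'(7)[of w] bij_is_inj[OF g'(1)] by (simp add: image_Int)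
  also have "\<dots> \<subseteq> \<phi> ` gen_ideal (smaller w)"
    using w unfolding Omega_def smaller_def by blast
  finally show ?thesis
    using smaller_image unfolding Omega_def smaller_def by blast
qed

lemma Omega_graded_aut_iff:
  fixes I :: "('n::finite, 'k::comm_ring_1) mpoly set"
  assumes g: "graded_aut deg (\<phi>, \<psi>)" and I: "\<phi> ` I = I"
  shows "\<psi> w \<in> Omega deg I \<longleftrightarrow> w \<in> Omega deg I"
proof
  show "w \<in> Omega deg I" if "\<psi> w \<in> Omega deg I"
    using not_in_Omega_graded_aut[OF g I, of w] that by blast
  have "inv \<phi> ` I = I"
    using graded_autD(1)[OF g] I by (rule inv_image_eq)
  then have "\<psi> w \<notin> Omega deg I \<Longrightarrow> inv \<psi> (\<psi> w) \<notin> Omega deg I"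
    by (rule not_in_Omega_graded_aut[OF graded_aut_inv[OF g]])
  then show "\<psi> w \<in> Omega deg I" if "w \<in> Omega deg I"
    using that graded_autD(5)[OF g] by (auto simp: bij_is_inj)
qed

lemma image_Wsum_graded_aut:
  fixes I :: "('n::finite, 'k::comm_ring_1) mpoly set"
  assumes g: "graded_aut deg (\<phi>, \<psi>)" and I: "\<phi> ` I = I"
  shows "\<phi> ` (I \<inter> Wsum deg I) \<subseteq> I \<inter> Wsum deg I"
proof
  note g' = graded_autD[OF g]
  fix y
  assume "y \<in> \<phi> ` (I \<inter> Wsum deg I)"
  then obtain f where f: "y = \<phi> f" "f \<in> I" "f \<in> Wsum deg I"
    by blast
  have "y = \<phi> (\<Sum>w\<in>mdeg deg ` Poly_Mapping.keys f. hom_comp deg w f)"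
    by (simp add: f(1) sum_hom_comp)
  also have "\<dots> = (\<Sum>w\<in>mdeg deg ` Poly_Mapping.keys f. \<phi> (hom_comp deg w f))"
    by (induct rule: finite_induct[OF finite_imageI[OF finite_keys]])
      (auto simp: additive_map_0[OF g'(2)] g'(2))
  also have "\<dots> \<in> Wsum deg I"
  proof (rule Wsum_sum)
    fix w
    assume "w \<in> mdeg deg ` Poly_Mapping.keys f"
    with f(3) have "\<psi> w \<in> Omega deg I"
      using Omega_graded_aut_iff[OF g I] by (auto simp: Wsum_def)
    moreover have "\<phi> (hom_comp deg w f) \<in> hom_part deg (\<psi> w)"
      using g'(7) hom_comp_in_hom_part by blast
    ultimately show "\<phi> (hom_comp deg w f) \<in> Wsum deg I"
      by (auto simp: Wsum_def hom_part_def)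
  qed simp
  finally show "y \<in> I \<inter> Wsum deg I"
    using f I by blast
qed

lemma graded_aut_stabilises_iff:
  fixes I :: "('n::finite, 'k::comm_ring_1) mpoly set"
  assumes g: "graded_aut deg (\<phi>, \<psi>)" and gen: "gen_ideal (I \<inter> Wsum deg I) = I"
  shows "\<phi> ` I = I \<longleftrightarrow> \<phi> ` (I \<inter> Wsum deg I) = I \<inter> Wsum deg I"
proof
  have g_inv: "graded_aut deg (inv \<phi>, inv \<psi>)"
    by (rule graded_aut_inv[OF g])
  note g' = graded_autD[OF g] and g_inv' = graded_autD[OF g_inv]
  show "\<phi> ` (I \<inter> Wsum deg I) = I \<inter> Wsum deg I" if "\<phi> ` I = I"
  proof (rule bij_image_eqI[OF g'(1)])
    show "\<phi> ` (I \<inter> Wsum deg I) \<subseteq> I \<inter> Wsum deg I"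
      by (rule image_Wsum_graded_aut[OF g that])
    have "inv \<phi> ` I = I"
      using g'(1) that by (rule inv_image_eq)
    then show "inv \<phi> ` (I \<inter> Wsum deg I) \<subseteq> I \<inter> Wsum deg I"
      by (rule image_Wsum_graded_aut[OF g_inv])
  qed
  text \<open>Conversely \<open>I\<close> is generated by \<open>I\<^sub>W\<close>, so both \<open>\<phi>\<close> and \<open>\<phi>\<^sup>-\<^sup>1\<close> map it into itself.\<close>
  show "\<phi> ` I = I" if W: "\<phi> ` (I \<inter> Wsum deg I) = I \<inter> Wsum deg I"
  proof (rule bij_image_eqI[OF g'(1)])
    show "\<phi> ` I \<subseteq> I"
      using image_gen_ideal_subset[of \<phi> "I \<inter> Wsum deg I", OF g'(2,3)] W gen by simp
    have "inv \<phi> ` (I \<inter> Wsum deg I) = I \<inter> Wsum deg I"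
      using g'(1) W by (rule inv_image_eq)
    then show "inv \<phi> ` I \<subseteq> I"
      using image_gen_ideal_subset[of "inv \<phi>" "I \<inter> Wsum deg I", OF g_inv'(2,3)] gen by simp
  qed
qed

lemma Stab_Aut_K_Wsum:
  fixes I :: "('n::finite, 'k::comm_ring_1) mpoly set"
  assumes "gen_ideal (I \<inter> Wsum deg I) = I"
  shows "Stab I (Aut_K deg) = Stab (I \<inter> Wsum deg I) (Aut_K deg)"
proof -
  have "g \<in> Stab I (Aut_K deg) \<longleftrightarrow> g \<in> Stab (I \<inter> Wsum deg I) (Aut_K deg)" for g
  proof (cases g)
    case (Pair \<phi> \<psi>)
    then show ?thesis
      using graded_aut_stabilises_iff[OF _ assms, of \<phi> \<psi>] unfolding Stab_def Aut_K_def by auto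
  qed
  then show ?thesis
    by blast
qed

theorem proposition2p8:
  fixes deg :: "'n::finite \<Rightarrow> 'g::ab_group_add"
    and \<pi> :: "('n, 'k::field_char_0) mpoly \<Rightarrow> 'r::idom"
  assumes alg_closed: "alg_closed_field TYPE('k)"
    and K_fg: "fin_gen_group TYPE('g)"
    and hom_add: "\<And>f h. \<pi> (f + h) = \<pi> f + \<pi> h"
    and hom_mult: "\<And>f h. \<pi> (f * h) = \<pi> f * \<pi> h"
    and hom_one: "\<pi> 1 = 1"
    and surj: "surj \<pi>"
    and graded_R: "\<And>A f. finite A \<Longrightarrow> (\<forall>w\<in>A. f w \<in> hom_part deg w) \<Longrightarrow>
                 \<pi> (\<Sum>w\<in>A. f w) = 0 \<Longrightarrow> (\<forall>w\<in>A. \<pi> (f w) = 0)"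
    and effective: "group_gen {w. \<pi> ` hom_part deg w \<noteq> {0}} = UNIV"
    and R0: "\<pi> ` hom_part deg 0 = range (\<lambda>c. \<pi> (const c))"
    and pointed: "\<not> qcone_contains_line {w. \<pi> ` hom_part deg w \<noteq> {0}}"
    and minimal: "\<And>f. \<pi> f = 0 \<Longrightarrow> \<forall>m\<in>Poly_Mapping.keys f. 2 \<le> tdeg m"
  shows "gen_ideal ({f. \<pi> f = 0} \<inter> Wsum deg {f. \<pi> f = 0}) = {f. \<pi> f = 0}
       \<and> Stab {f. \<pi> f = 0} (Aut_K deg) = Stab ({f. \<pi> f = 0} \<inter> Wsum deg {f. \<pi> f = 0}) (Aut_K deg)"
proof -
  interpret minimal_presentation deg \<pi>
    using hom_add hom_mult hom_one graded_R R0 minimal by unfold_locales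
  show ?thesis
    using gen_ideal_kernel_Wsum Stab_Aut_K_Wsum[OF gen_ideal_kernel_Wsum] by blast
qed

end
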